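(* Let $n,m,k\ge 1$ and let $S$ be a Boolean $n\times m$ matrix. Let $\bar S$ be the Boolean $(n+2)\times(m+2)$ matrix whose first row is all ones, whose first column is all ones, whose remaining entries in the second row and in the second column are $0$, and whose lower-right $n\times m$ block is $S$ (i.e. $\bar s_{ij}=s_{i-2,j-2}$ for $i,j\ge 3$). Then there exist a Boolean $(n+2)\times(k+2)$ matrix $\bar E$ and a Boolean $(k+2)\times(m+2)$ matrix $\bar P$ with $\bar S=\bar E\cdot\bar P$ if and only if there exist a Boolean $n\times k$ matrix $E$ and a Boolean $k\times m$ matrix $P$ with $S=E\cdot P$.
   Context: All matrices are over the Boolean algebra $(\{0,1\},\vee,\wedge)$. The Boolean matrix product of an $n\times k$ matrix $E=(e_{ia})$ and a $k\times m$ matrix $P=(p_{aj})$ is the $n\times m$ matrix $E\cdot P$ with entries $(E\cdot P)_{ij}=\bigvee_{a=1}^{k}(e_{ia}\wedge p_{aj})$. *)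

theory Defs
  imports Main
begin

text \<open>Boolean matrices are represented as functions nat \<Rightarrow> nat \<Rightarrow> bool, indexed from 0;
  only the entries with row index < number of rows and column index < number of columns
  are meaningful.\<close>

type_synonym bmat = "nat \<Rightarrow> nat \<Rightarrow> bool"

definition bool_mult :: "nat \<Rightarrow> bmat \<Rightarrow> bmat \<Rightarrow> bmat" where
  "bool_mult k E P = (\<lambda>i j. \<exists>a<k. E i a \<and> P a j)"

definition bmat_eq :: "nat \<Rightarrow> nat \<Rightarrow> bmat \<Rightarrow> bmat \<Rightarrow> bool" where
  "bmat_eq n m A B = (\<forall>i<n. \<forall>j<m. A i j = B i j)"

definition bar_mat :: "bmat \<Rightarrow> bmat" where
  "bar_mat S = (\<lambda>i j. if i = 0 \<or> j = 0 then True
                      else if i = 1 \<or> j = 1 then False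
                      else S (i - 2) (j - 2))"

end

theory Submission
  imports Defs
begin

text \<open>A factorization of S through k factorizes S-bar through k + 2 by adding one inner index
  feeding the first row and one feeding the first column. Conversely, in a factorization of
  S-bar the entry (2, 1) is produced by an inner index a whose row of the right factor vanishes
  beyond column 1 (the second row of S-bar is zero there), and the entry (1, 2) by an index b
  whose column of the left factor vanishes below row 1. These two distinct indices never
  contribute to the lower-right block, so deleting them leaves a factorization of S through k.\<close>

lemma bmat_eq_trans:
  "bmat_eq n m A B \<Longrightarrow> bmat_eq n m B C \<Longrightarrow> bmat_eq n m A C"
  by (simp add: bmat_eq_def)

lemma bool_mult_restrict_inner:
  assumes "A \<subseteq> {..<K}"
    and contributing: "\<And>i j a. i < n \<Longrightarrow> j < m \<Longrightarrow> a < K \<Longrightarrow> E i a \<Longrightarrow> P a j \<Longrightarrow> a \<in> A"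
  shows "\<exists>E' P'. bmat_eq n m (bool_mult K E P) (bool_mult (card A) E' P')"
proof -
  have "finite A" using assms(1) finite_subset by blast
  then obtain h where h: "bij_betw h {0..<card A} A" using ex_bij_betw_nat_finite by blast
  have "bool_mult K E P i j = bool_mult (card A) (\<lambda>i c. E i (h c)) (\<lambda>c j. P (h c) j) i j"
    if "i < n" "j < m" for i j
  proof -
    have "bool_mult K E P i j = (\<exists>a\<in>A. E i a \<and> P a j)"
      using assms that unfolding bool_mult_def by blast
    also have "\<dots> = (\<exists>a\<in>h ` {0..<card A}. E i a \<and> P a j)"
      using bij_betw_imp_surj_on[OF h] by simp
    also have "\<dots> = (\<exists>c\<in>{0..<card A}. E i (h c) \<and> P (h c) j)"
      by simp
    finally show ?thesis by (auto simp: bool_mult_def)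
  qed
  then show ?thesis unfolding bmat_eq_def by blast
qed

definition bar_left :: "bmat \<Rightarrow> bmat" where
  "bar_left E = (\<lambda>i a. if a = 0 then i = 0 else if a = 1 then True
                       else 2 \<le> i \<and> E (i - 2) (a - 2))"

definition bar_right :: "bmat \<Rightarrow> bmat" where
  "bar_right P = (\<lambda>a j. if a = 0 then True else if a = 1 then j = 0
                        else 2 \<le> j \<and> P (a - 2) (j - 2))"

lemma ex_less_add2_iff:
  fixes k :: nat
  shows "(\<exists>a<k + 2. Q a) \<longleftrightarrow> Q 0 \<or> Q 1 \<or> (\<exists>c<k. Q (c + 2))"
proof
  assume "\<exists>a<k + 2. Q a"
  then obtain a where "a < k + 2" "Q a" by blast
  moreover have "a = 0 \<or> a = 1 \<or> (\<exists>c. a = c + 2)" by presburger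
  ultimately show "Q 0 \<or> Q 1 \<or> (\<exists>c<k. Q (c + 2))" by auto
next
  assume "Q 0 \<or> Q 1 \<or> (\<exists>c<k. Q (c + 2))"
  moreover have "(0::nat) < k + 2" "(1::nat) < k + 2" by simp_all
  ultimately show "\<exists>a<k + 2. Q a" by (meson add_less_mono1)
qed

lemma bar_left_simps [simp]:
  "bar_left E i 0 = (i = 0)" "bar_left E i 1" "bar_left E i (c + 2) = (2 \<le> i \<and> E (i - 2) c)"
  by (simp_all add: bar_left_def)

lemma bar_right_simps [simp]:
  "bar_right P 0 j" "bar_right P 1 j = (j = 0)" "bar_right P (c + 2) j = (2 \<le> j \<and> P c (j - 2))"
  by (simp_all add: bar_right_def)

lemma bool_mult_bar:
  "bool_mult (k + 2) (bar_left E) (bar_right P) = bar_mat (bool_mult k E P)"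
  unfolding bool_mult_def ex_less_add2_iff bar_left_simps bar_right_simps
  by (intro ext) (auto simp: bar_mat_def bar_left_def)

lemma bmat_eq_bar_mat:
  "bmat_eq n m S T \<Longrightarrow> bmat_eq (n + 2) (m + 2) (bar_mat S) (bar_mat T)"
  by (auto simp: bmat_eq_def bar_mat_def less_diff_conv)

lemma factor_of_bar_factor:
  assumes "bmat_eq (n + 2) (m + 2) (bar_mat S) (bool_mult (k + 2) Eb Pb)"
  shows "\<exists>E P. bmat_eq n m S (bool_mult k E P)"
proof -
  have prod: "bar_mat S i j = (\<exists>a<k + 2. Eb i a \<and> Pb a j)" if "i < n + 2" "j < m + 2" for i j
    using assms that unfolding bmat_eq_def bool_mult_def by blast
  obtain a where a: "a < k + 2" "Eb 1 a"
    using prod[of 1 0] by (auto simp: bar_mat_def)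
  then have a_row: "\<not> Pb a j" if "1 \<le> j" "j < m + 2" for j
    using prod[of 1 j] that by (auto simp: bar_mat_def)
  obtain b where b: "b < k + 2" "Pb b 1"
    using prod[of 0 1] by (auto simp: bar_mat_def)
  then have b_col: "\<not> Eb i b" if "1 \<le> i" "i < n + 2" for i
    using prod[of i 1] that by (auto simp: bar_mat_def)
  have "a \<noteq> b" using a_row[of 1] b(2) by auto
  let ?A = "{..<k + 2} - {a, b}"
  have card: "card ?A = k" using a(1) b(1) \<open>a \<noteq> b\<close> by (simp add: card_Diff_subset)
  have block: "bmat_eq n m S (bool_mult (k + 2) (\<lambda>i c. Eb (i + 2) c) (\<lambda>c j. Pb c (j + 2)))"
    unfolding bmat_eq_def bool_mult_def
  proof (intro allI impI)
    fix i j assume "i < n" "j < m"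
    then show "S i j = (\<exists>c<k + 2. Eb (i + 2) c \<and> Pb c (j + 2))"
      using prod[of "i + 2" "j + 2"] by (simp add: bar_mat_def)
  qed
  have "a' \<in> ?A" if "i < n" "j < m" "a' < k + 2" "Eb (i + 2) a'" "Pb a' (j + 2)" for i j a'
    using that a_row[of "j + 2"] b_col[of "i + 2"] by auto
  then have "\<exists>E P. bmat_eq n m (bool_mult (k + 2) (\<lambda>i c. Eb (i + 2) c) (\<lambda>c j. Pb c (j + 2)))
                                (bool_mult (card ?A) E P)"
    by (intro bool_mult_restrict_inner) auto
  then obtain E P where "bmat_eq n m (bool_mult (k + 2) (\<lambda>i c. Eb (i + 2) c) (\<lambda>c j. Pb c (j + 2)))
                                (bool_mult k E P)"
    unfolding card by blast
  with block show ?thesis using bmat_eq_trans by blast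
qed

theorem lemma2:
  fixes n m k :: nat and S :: bmat
  assumes "n \<ge> 1" and "m \<ge> 1" and "k \<ge> 1"
  shows "(\<exists>Eb Pb :: bmat. bmat_eq (n + 2) (m + 2) (bar_mat S) (bool_mult (k + 2) Eb Pb))
     \<longleftrightarrow> (\<exists>E P :: bmat. bmat_eq n m S (bool_mult k E P))"
proof
  show "\<exists>E P. bmat_eq n m S (bool_mult k E P)"
    if "\<exists>Eb Pb. bmat_eq (n + 2) (m + 2) (bar_mat S) (bool_mult (k + 2) Eb Pb)"
    using that factor_of_bar_factor by blast
next
  assume "\<exists>E P. bmat_eq n m S (bool_mult k E P)"
  then obtain E P where "bmat_eq n m S (bool_mult k E P)" by blast
  then have "bmat_eq (n + 2) (m + 2) (bar_mat S) (bool_mult (k + 2) (bar_left E) (bar_right P))"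
    unfolding bool_mult_bar by (rule bmat_eq_bar_mat)
  then show "\<exists>Eb Pb. bmat_eq (n + 2) (m + 2) (bar_mat S) (bool_mult (k + 2) Eb Pb)" by blast
qed

end
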